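(* In the mixture setting, assume the prior is invariant under relabelling so that $\pi(P_\sigma\theta)L(P_\sigma\theta)=\pi(\theta)L(\theta)$ for all permutations $\sigma$ of $\{1,\dots,G\}$, and let $Z(G)=\int\pi(\theta)L(\theta)\,d\theta\in(0,\infty)$. Let $T$ be even and let $B\subset\mathbb{R}^R$ be a fixed measurable set (determined independently of the draws below) with $0<V(B)<\infty$ such that $\pi(\theta)L(\theta)>q$ for all $\theta\in B$, for some $q>0$. Suppose $\theta^{(T/2+1)},\dots,\theta^{(T)}$ are i.i.d. from the posterior, and let $\theta^{(t)\star}=P_{\sigma_t}(\theta^{(t)})$ be a relabelling of them. Define the symmetric THAMES $$\hat Z_{\mathrm S}^{-1}(G)=\frac{1}{G!}\sum_{\sigma}\frac{1}{T/2}\sum_{\substack{t=T/2+1\\ P_\sigma(\theta^{(t)\star})\in B}}^{T}\frac{1/V(B)}{\pi(\theta^{(t)\star})L(\theta^{(t)\star})},$$ the outer sum being over all $G!$ permutations. Then $\hat Z_{\mathrm S}^{-1}(G)=\frac{1}{T/2}\sum_{t=T/2+1}^T \frac{h(\theta^{(t)})}{\pi(\theta^{(t)})L(\theta^{(t)})}$ with the probability density $h(\theta)=\frac{1}{G!}\sum_\sigma \mathbb 1_B(P_\sigma\theta)/V(B)$, and $\hat Z_{\mathrm S}^{-1}(G)$ is an unbiased estimator of $1/Z(G)$ with finite variance, it converges almost surely to $1/Z(G)$ as $T\to\infty$, and $\sqrt{T/2}\,(\hat Z_{\mathrm S}^{-1}(G)-1/Z(G))$ converges in distribution to a centred normal 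distribution.
   Context: Mixture model: data $Y_1,\dots,Y_n$ i.i.d. with density $\sum_{g=1}^G\tau_g f(\cdot\mid\xi_g)$; parameter $\theta=(\xi_1,\dots,\xi_G,\tau_1,\dots,\tau_{G-1})\in\mathbb{R}^R$, prior density $\pi$, likelihood $L$. For a permutation $\sigma$ of $\{1,\dots,G\}$, $P_\sigma$ is the relabelling map sending $\theta$ to the parameter with components $(\xi_{\sigma(1)},\dots,\xi_{\sigma(G)})$ and proportions $(\tau_{\sigma(1)},\dots,\tau_{\sigma(G)})$, $\tau_G=1-\sum_{g<G}\tau_g$; each $P_\sigma$ is an affine bijection with Jacobian determinant $\pm1$. A relabelling of a sample means $\theta^{(t)\star}=P_{\sigma_t}(\theta^{(t)})$ for permutations $\sigma_t$ possibly depending on the sample. In the paper, $B=B_{\hat\theta,\hat\Sigma,c,\alpha}=\{\theta:(\theta-\hat\theta)^\top\hat\Sigma^{-1}(\theta-\hat\theta)<c^2,\ \pi(\theta)L(\theta)>\hat q_\alpha\}$ with $\hat\theta,\hat\Sigma$ (mean and covariance estimates) and $\hat q_\alpha>0$ computed from the first half of the sample. *)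

theory Defs
  imports "HOL-Probability.Probability"
begin

text \<open>Parameters theta in R^R, R = G*d + (G-1), represented as extensional functions on
  the index set {..<R} (0-indexed).  Coordinates g*d+j (g<G, j<d) hold xi_g, coordinates
  G*d+g (g<G-1) hold tau_g.  Components are 0-indexed: g = 0..G-1.\<close>

definition param_dim :: "nat \<Rightarrow> nat \<Rightarrow> nat" where
  "param_dim d G = G * d + (G - 1)"

definition param_space :: "nat \<Rightarrow> nat \<Rightarrow> (nat \<Rightarrow> real) measure" where
  "param_space d G = PiM {..<param_dim d G} (\<lambda>_. lborel)"

definition mix_xi :: "nat \<Rightarrow> (nat \<Rightarrow> real) \<Rightarrow> nat \<Rightarrow> (nat \<Rightarrow> real)" where
  "mix_xi d \<theta> g = (\<lambda>j. if j < d then \<theta> (g * d + j) else undefined)"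

definition mix_tau :: "nat \<Rightarrow> nat \<Rightarrow> (nat \<Rightarrow> real) \<Rightarrow> nat \<Rightarrow> real" where
  "mix_tau d G \<theta> g =
     (if g < G - 1 then \<theta> (G * d + g) else 1 - (\<Sum>h<G - 1. \<theta> (G * d + h)))"

definition relabel :: "nat \<Rightarrow> nat \<Rightarrow> (nat \<Rightarrow> nat) \<Rightarrow> (nat \<Rightarrow> real) \<Rightarrow> (nat \<Rightarrow> real)" where
  "relabel d G \<sigma> \<theta> =
     (\<lambda>i. if i < G * d then \<theta> (\<sigma> (i div d) * d + i mod d)
          else if i < G * d + (G - 1) then mix_tau d G \<theta> (\<sigma> (i - G * d))
          else undefined)"

definition mix_lik ::
  "nat \<Rightarrow> nat \<Rightarrow> ('y \<Rightarrow> (nat \<Rightarrow> real) \<Rightarrow> real) \<Rightarrow> (nat \<Rightarrow> 'y) \<Rightarrow> nat \<Rightarrow> (nat \<Rightarrow> real) \<Rightarrow> real" where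
  "mix_lik d G f Y n \<theta> = (\<Prod>i<n. \<Sum>g<G. mix_tau d G \<theta> g * f (Y i) (mix_xi d \<theta> g))"

text \<open>Symmetric THAMES for sample size T, using the relabelled draws thstar t,
  t = T/2+1..T; pL is the unnormalised posterior pi*L.\<close>
definition thames_sym ::
  "nat \<Rightarrow> nat \<Rightarrow> (nat \<Rightarrow> real) set \<Rightarrow> ((nat \<Rightarrow> real) \<Rightarrow> real) \<Rightarrow> nat \<Rightarrow> (nat \<Rightarrow> (nat \<Rightarrow> real)) \<Rightarrow> real" where
  "thames_sym d G B pL T thstar =
     (1 / fact G) * (\<Sum>\<sigma>\<in>{\<sigma>. \<sigma> permutes {..<G}}.
        (1 / (real T / 2)) *
          (\<Sum>t\<in>{t\<in>{T div 2 + 1..T}. relabel d G \<sigma> (thstar t) \<in> B}.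
             (1 / measure (param_space d G) B) / pL (thstar t)))"

definition sym_density :: "nat \<Rightarrow> nat \<Rightarrow> (nat \<Rightarrow> real) set \<Rightarrow> (nat \<Rightarrow> real) \<Rightarrow> real" where
  "sym_density d G B \<theta> =
     (1 / fact G) * (\<Sum>\<sigma>\<in>{\<sigma>. \<sigma> permutes {..<G}}.
        indicator B (relabel d G \<sigma> \<theta>) / measure (param_space d G) B)"

definition centred_normal :: "real \<Rightarrow> real measure" where
  "centred_normal s = (if s = 0 then return borel 0 else density lborel (normal_density 0 s))"

end

(*
  Every relabelling P_sigma is a volume-preserving map of the parameter space: a permutation of
  the coordinates, followed by a shear in one proportion coordinate when sigma moves the last
  component (whose proportion is not a coordinate). Hence h is a probability density, and since
  prior times likelihood is relabelling invariant, the average over sigma can be moved inside the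
  sum: the symmetric THAMES is the ordinary THAMES with instrumental density h. As h vanishes off
  the orbit of B, where prior times likelihood exceeds q, its summands are i.i.d. with values in
  [0, 1/(V(B) q)] and mean (integral of h)/Z = 1/Z. Hoeffding's inequality together with
  Borel-Cantelli gives almost sure convergence, and the central limit theorem gives asymptotic
  normality.
*)
theory Submission
  imports Defs
begin

section \<open>Relabelling maps of the parameter space\<close>

lemma measurable_PiM_reindex:
  assumes "\<rho> \<in> I \<rightarrow> I"
  shows "(\<lambda>x. \<lambda>i\<in>I. x (\<rho> i)) \<in> measurable (PiM I (\<lambda>_. N)) (PiM I (\<lambda>_. N))"
  using assms by (intro measurable_restrict measurable_component_singleton) auto

lemma distr_PiM_reindex_bij:
  assumes fin: "finite I" and \<rho>: "bij_betw \<rho> I I" and N: "sigma_finite_measure N"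
  shows "distr (PiM I (\<lambda>_. N)) (PiM I (\<lambda>_. N)) (\<lambda>x. \<lambda>i\<in>I. x (\<rho> i)) = PiM I (\<lambda>_. N)"
proof -
  interpret product_sigma_finite "\<lambda>_. N"
    using N by (simp add: product_sigma_finite_def)
  let ?\<rho>' = "the_inv_into I \<rho>"
  have \<rho>\<rho>': "\<rho> (?\<rho>' j) = j" "?\<rho>' j \<in> I" if "j \<in> I" for j
    using \<rho> that by (auto simp: bij_betw_def f_the_inv_into_f the_inv_into_into)
  have \<rho>'\<rho>: "?\<rho>' (\<rho> i) = i" if "i \<in> I" for i
    using \<rho> that by (auto simp: bij_betw_def the_inv_into_f_f)
  have \<rho>I: "\<rho> \<in> I \<rightarrow> I"
    using \<rho> by (auto simp: bij_betw_def)
  show ?thesis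
  proof (rule PiM_eqI[OF fin])
    fix A assume A: "\<And>i. i \<in> I \<Longrightarrow> A i \<in> sets N"
    have "(\<lambda>x. \<lambda>i\<in>I. x (\<rho> i)) -` PiE I A \<inter> space (PiM I (\<lambda>_. N)) = PiE I (\<lambda>j. A (?\<rho>' j))"
      using \<rho>I \<rho>\<rho>' \<rho>'\<rho> sets.sets_into_space[OF A]
      by (auto simp: space_PiM PiE_iff) (metis \<rho>\<rho>', metis \<rho>'\<rho> \<rho>I funcset_mem, metis \<rho>\<rho>'(2) subsetD)
    then have "distr (PiM I (\<lambda>_. N)) (PiM I (\<lambda>_. N)) (\<lambda>x. \<lambda>i\<in>I. x (\<rho> i)) (PiE I A)
        = (\<Prod>j\<in>I. emeasure N (A (?\<rho>' j)))"
      using A \<rho>\<rho>'(2) \<rho>I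
      by (subst emeasure_distr) (auto intro!: measurable_PiM_reindex sets_PiM_I_finite fin emeasure_PiM)
    also have "\<dots> = (\<Prod>i\<in>I. emeasure N (A i))"
      using \<rho> \<rho>'\<rho> by (subst prod.reindex_bij_betw[symmetric, OF \<rho>]) auto
    finally show "distr (PiM I (\<lambda>_. N)) (PiM I (\<lambda>_. N)) (\<lambda>x. \<lambda>i\<in>I. x (\<rho> i)) (PiE I A)
        = (\<Prod>i\<in>I. emeasure N (A i))" .
  qed simp
qed

lemma measurable_PiM_shear:
  fixes a :: real
  assumes "c \<in> I" "J \<subseteq> I"
  shows "(\<lambda>x. x(c := a - x c - (\<Sum>h\<in>J. x h))) \<in> measurable (PiM I (\<lambda>_. lborel)) (PiM I (\<lambda>_. lborel))"
proof (rule measurable_fun_upd[where J = I])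
  have [measurable]: "(\<lambda>x. x i) \<in> borel_measurable (PiM I (\<lambda>_. lborel :: real measure))" if "i \<in> I" for i
    using measurable_component_singleton[OF that, of "\<lambda>_. lborel"] by simp
  show "(\<lambda>x. a - x c - (\<Sum>h\<in>J. x h)) \<in> measurable (PiM I (\<lambda>_. lborel)) lborel"
    using assms by (auto intro!: borel_measurable_diff borel_measurable_sum)
qed (use assms in auto)

text \<open>Fubini in the coordinate \<open>c\<close>: for fixed other coordinates the shear is the reflection
  \<open>y \<mapsto> t - y\<close> of the real line, which preserves Lebesgue measure.\<close>
lemma distr_PiM_lborel_shear:
  fixes a :: real
  assumes fin: "finite I" and c: "c \<in> I" and J: "J \<subseteq> I - {c}"
  defines "S \<equiv> \<lambda>x. x(c := a - x c - (\<Sum>h\<in>J. x h))"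
  shows "distr (PiM I (\<lambda>_. lborel)) (PiM I (\<lambda>_. lborel)) S = PiM I (\<lambda>_. lborel)"
proof (rule measure_eqI)
  interpret product_sigma_finite "\<lambda>_. lborel :: real measure"
    by standard
  let ?P = "PiM I (\<lambda>_. lborel :: real measure)" and ?I' = "I - {c}"
  have I: "I = insert c ?I'" "c \<notin> ?I'" "finite ?I'"
    using c fin by auto
  have S: "S \<in> measurable ?P ?P"
    unfolding S_def using c J by (intro measurable_PiM_shear) auto
  fix A assume "A \<in> sets (distr ?P ?P S)"
  then have A[measurable]: "A \<in> sets ?P"
    by simp
  have reflect: "(\<integral>\<^sup>+y. indicator A (S (x(c := y))) \<partial>lborel) = (\<integral>\<^sup>+y. indicator A (x(c := y)) \<partial>lborel)"
    if x: "x \<in> space (PiM ?I' (\<lambda>_. lborel))" for x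
  proof -
    have upd: "(\<lambda>y. x(c := y)) \<in> measurable lborel ?P"
      using measurable_component_update[OF x I(2)] I(1) by simp
    have "(\<Sum>h\<in>J. (x(c := y)) h) = (\<Sum>h\<in>J. x h)" for y
      using J by (intro sum.cong) auto
    then have "S (x(c := y)) = x(c := (a - (\<Sum>h\<in>J. x h)) + (-1) * y)" for y
      by (simp add: S_def algebra_simps)
    moreover have "(\<lambda>y. indicator A (x(c := y)) :: ennreal) \<in> borel_measurable borel"
      using measurable_compose[OF upd borel_measurable_indicator[OF A]] by simp
    ultimately show ?thesis
      using nn_integral_real_affine[of "\<lambda>y. indicator A (x(c := y))" "-1"] by simp
  qed
  have "emeasure (distr ?P ?P S) A = (\<integral>\<^sup>+x. indicator A x \<partial>distr ?P ?P S)"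
    by simp
  also have "\<dots> = (\<integral>\<^sup>+x. indicator A (S x) \<partial>?P)"
    by (rule nn_integral_distr[OF S]) simp
  also have "\<dots> = (\<integral>\<^sup>+x. (\<integral>\<^sup>+y. indicator A (S (x(c := y))) \<partial>lborel) \<partial>PiM ?I' (\<lambda>_. lborel))"
    using product_nn_integral_insert[OF I(3) I(2), of "\<lambda>x. indicator A (S x)"] I(1)
      measurable_compose[OF S borel_measurable_indicator[OF A]] by simp
  also have "\<dots> = (\<integral>\<^sup>+x. (\<integral>\<^sup>+y. indicator A (x(c := y)) \<partial>lborel) \<partial>PiM ?I' (\<lambda>_. lborel))"
    by (rule nn_integral_cong) (rule reflect)
  also have "\<dots> = emeasure ?P A"
    using product_nn_integral_insert[OF I(3) I(2), of "indicator A"] I(1) by simp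
  finally show "emeasure (distr ?P ?P S) A = emeasure ?P A" .
qed simp

text \<open>Composing with the transposition of \<open>G - 1\<close> and \<open>\<sigma> (G - 1)\<close> makes \<open>\<sigma>\<close> fix
  \<open>G - 1\<close>, giving a permutation of the indices of the free proportions.\<close>
definition relabel_tau_perm :: "nat \<Rightarrow> (nat \<Rightarrow> nat) \<Rightarrow> nat \<Rightarrow> nat" where
  "relabel_tau_perm G \<sigma> = Transposition.transpose (G - 1) (\<sigma> (G - 1)) \<circ> \<sigma>"

definition relabel_index :: "nat \<Rightarrow> nat \<Rightarrow> (nat \<Rightarrow> nat) \<Rightarrow> nat \<Rightarrow> nat" where
  "relabel_index d G \<sigma> i =
     (if i < G * d then \<sigma> (i div d) * d + i mod d else G * d + relabel_tau_perm G \<sigma> (i - G * d))"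

lemma relabel_tau_perm_permutes:
  assumes "\<sigma> permutes {..<G}" "G \<ge> 1"
  shows "relabel_tau_perm G \<sigma> permutes {..<G - 1}"
proof -
  have "{..<G} = insert (G - 1) {..<G - 1}"
    using assms(2) by auto
  then show ?thesis
    using permutes_insert_lemma[of \<sigma> "G - 1" "{..<G - 1}"] assms(1)
    by (simp add: relabel_tau_perm_def)
qed

lemma relabel_tau_perm_eq:
  assumes "\<sigma> permutes {..<G}" "j < G - 1" "\<sigma> j \<noteq> G - 1"
  shows "relabel_tau_perm G \<sigma> j = \<sigma> j"
proof -
  have "\<sigma> j \<noteq> \<sigma> (G - 1)"
    using assms(2) permutes_inj[OF assms(1)] by (auto dest: injD)
  then show ?thesis
    using assms(3) by (simp add: relabel_tau_perm_def)
qed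

lemma permutes_block_index_less:
  fixes \<sigma> :: "nat \<Rightarrow> nat"
  assumes "\<sigma> permutes {..<G}" "i < G * d"
  shows "\<sigma> (i div d) * d + i mod d < G * d"
proof -
  have "d > 0" "i div d < G"
    using assms(2) by (auto intro: gr0I less_mult_imp_div_less)
  then have "\<sigma> (i div d) < G" "i mod d < d"
    using permutes_in_image[OF assms(1)] by auto
  then have "\<sigma> (i div d) * d + i mod d < (\<sigma> (i div d) + 1) * d"
    by simp
  also have "\<dots> \<le> G * d"
    using \<open>\<sigma> (i div d) < G\<close> by (intro mult_le_mono1) simp
  finally show ?thesis .
qed

lemma block_index_inverse:
  fixes \<pi> \<pi>' :: "nat \<Rightarrow> nat"
  assumes "\<pi>' (\<pi> (i div d)) = i div d" "i < G * d"
  shows "\<pi>' ((\<pi> (i div d) * d + i mod d) div d) * d + (\<pi> (i div d) * d + i mod d) mod d = i"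
proof -
  have "d > 0"
    using assms(2) by (auto intro: gr0I)
  then show ?thesis
    using assms(1) by simp
qed

lemma bij_betw_relabel_index:
  assumes \<sigma>: "\<sigma> permutes {..<G}" and G: "G \<ge> 1"
  shows "bij_betw (relabel_index d G \<sigma>) {..<param_dim d G} {..<param_dim d G}"
proof -
  let ?\<tau> = "relabel_tau_perm G \<sigma>"
  have \<tau>: "?\<tau> permutes {..<G - 1}"
    using \<sigma> G by (rule relabel_tau_perm_permutes)
  have inv\<sigma>: "inv \<sigma> permutes {..<G}"
    using \<sigma> by (rule permutes_inv)
  define w where
    "w i = (if i < G * d then inv \<sigma> (i div d) * d + i mod d else G * d + inv ?\<tau> (i - G * d))" for i
  show ?thesis
  proof (rule bij_betw_byWitness[where f' = w])
    show "\<forall>i\<in>{..<param_dim d G}. w (relabel_index d G \<sigma> i) = i"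
    proof
      fix i assume "i \<in> {..<param_dim d G}"
      then show "w (relabel_index d G \<sigma> i) = i"
        using block_index_inverse[of "inv \<sigma>" \<sigma> i] permutes_block_index_less[OF \<sigma>, of i d]
          permutes_inverses(2)[OF \<sigma>] permutes_inverses(2)[OF \<tau>]
        by (cases "i < G * d") (simp_all add: w_def relabel_index_def param_dim_def)
    qed
    show "\<forall>i\<in>{..<param_dim d G}. relabel_index d G \<sigma> (w i) = i"
    proof
      fix i assume "i \<in> {..<param_dim d G}"
      then show "relabel_index d G \<sigma> (w i) = i"
        using block_index_inverse[of \<sigma> "inv \<sigma>" i] permutes_block_index_less[OF inv\<sigma>, of i d]
          permutes_inverses(1)[OF \<sigma>] permutes_inverses(1)[OF \<tau>]
        by (cases "i < G * d") (simp_all add: w_def relabel_index_def param_dim_def)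
    qed
    show "relabel_index d G \<sigma> ` {..<param_dim d G} \<subseteq> {..<param_dim d G}"
    proof (rule image_subsetI)
      fix i assume "i \<in> {..<param_dim d G}"
      then show "relabel_index d G \<sigma> i \<in> {..<param_dim d G}"
        using permutes_block_index_less[OF \<sigma>, of i d] permutes_in_image[OF \<tau>, of "i - G * d"] G
        by (cases "i < G * d") (auto simp: relabel_index_def param_dim_def)
    qed
    show "w ` {..<param_dim d G} \<subseteq> {..<param_dim d G}"
    proof (rule image_subsetI)
      fix i assume "i \<in> {..<param_dim d G}"
      then show "w i \<in> {..<param_dim d G}"
        using permutes_block_index_less[OF inv\<sigma>, of i d]
          permutes_in_image[OF permutes_inv[OF \<tau>], of "i - G * d"] G
        by (cases "i < G * d") (auto simp: w_def param_dim_def)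
    qed
  qed
qed

lemma relabel_eq_reindex_at:
  assumes \<sigma>: "\<sigma> permutes {..<G}" and i: "G * d \<le> i \<and> i < param_dim d G \<longrightarrow> \<sigma> (i - G * d) \<noteq> G - 1"
  shows "relabel d G \<sigma> \<theta> i = (\<lambda>i\<in>{..<param_dim d G}. \<theta> (relabel_index d G \<sigma> i)) i"
proof (cases "G * d \<le> i \<and> i < param_dim d G")
  case True
  then obtain k where k: "i = G * d + k" "k < G - 1"
    by (metis add_less_cancel_left le_add_diff_inverse param_dim_def)
  moreover have "\<sigma> k < G"
    using permutes_in_image[OF \<sigma>] k by auto
  ultimately have "\<sigma> k < G - 1" "relabel_tau_perm G \<sigma> k = \<sigma> k"
    using True i relabel_tau_perm_eq[OF \<sigma>] by auto
  then show ?thesis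
    using k by (simp add: relabel_def relabel_index_def mix_tau_def param_dim_def)
next
  case False
  then show ?thesis
    by (cases "i < G * d") (simp_all add: relabel_def relabel_index_def param_dim_def)
qed

lemma relabel_eq_reindex:
  assumes \<sigma>: "\<sigma> permutes {..<G}" and "\<sigma> (G - 1) = G - 1"
  shows "relabel d G \<sigma> \<theta> = (\<lambda>i\<in>{..<param_dim d G}. \<theta> (relabel_index d G \<sigma> i))"
proof
  fix i
  have "\<sigma> (i - G * d) \<noteq> \<sigma> (G - 1)" if "G * d \<le> i" "i < param_dim d G"
    using that permutes_inj[OF \<sigma>] by (simp add: param_dim_def inj_eq)
  then show "relabel d G \<sigma> \<theta> i = (\<lambda>i\<in>{..<param_dim d G}. \<theta> (relabel_index d G \<sigma> i)) i"
    using assms(2) by (intro relabel_eq_reindex_at[OF \<sigma>]) auto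
qed

text \<open>If the component moved into the last position \<open>G - 1\<close> is \<open>j\<close>, the proportion
  stored at \<open>G * d + j\<close> becomes the dependent one \<open>1 - \<Sum> \<tau>\<close>; after reindexing this
  is a shear in that single coordinate.\<close>
lemma relabel_eq_shear_reindex:
  fixes d :: nat and \<theta> :: "nat \<Rightarrow> real"
  assumes \<sigma>: "\<sigma> permutes {..<G}" and G: "G \<ge> 1" and j: "j < G - 1" "\<sigma> j = G - 1"
  defines "r \<equiv> \<lambda>i\<in>{..<param_dim d G}. \<theta> (relabel_index d G \<sigma> i)"
  shows "relabel d G \<sigma> \<theta>
    = r(G * d + j := 1 - r (G * d + j) - (\<Sum>h\<in>(+) (G * d) ` ({..<G - 1} - {j}). r h))"
proof
  fix i
  show "relabel d G \<sigma> \<theta> i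
    = (r(G * d + j := 1 - r (G * d + j) - (\<Sum>h\<in>(+) (G * d) ` ({..<G - 1} - {j}). r h))) i"
  proof (cases "i = G * d + j")
    case True
    have "r (G * d + j) + (\<Sum>h\<in>(+) (G * d) ` ({..<G - 1} - {j}). r h)
        = (\<Sum>h\<in>(+) (G * d) ` {..<G - 1}. r h)"
      using j(1) by (simp add: sum.remove[of _ "G * d + j"] image_set_diff)
    also have "\<dots> = (\<Sum>k<G - 1. r (G * d + k))"
      by (simp add: sum.reindex)
    also have "\<dots> = (\<Sum>k<G - 1. \<theta> (G * d + relabel_tau_perm G \<sigma> k))"
      by (intro sum.cong) (auto simp: r_def relabel_index_def param_dim_def)
    also have "\<dots> = (\<Sum>k<G - 1. \<theta> (G * d + k))"
      using sum.permute[OF relabel_tau_perm_permutes[OF \<sigma> G], of "\<lambda>k. \<theta> (G * d + k)"]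
      by (simp add: comp_def)
    finally show ?thesis
      using True j by (auto simp: relabel_def mix_tau_def param_dim_def)
  next
    case False
    have "\<sigma> (i - G * d) \<noteq> \<sigma> j" if "G * d \<le> i"
      using that False permutes_inj[OF \<sigma>] by (auto simp: inj_eq)
    then have "relabel d G \<sigma> \<theta> i = r i"
      unfolding r_def using j(2) by (intro relabel_eq_reindex_at[OF \<sigma>]) auto
    then show ?thesis
      using False by simp
  qed
qed

lemma relabel_measure_preserving:
  assumes \<sigma>: "\<sigma> permutes {..<G}" and G: "G \<ge> 1"
  shows measurable_relabel: "relabel d G \<sigma> \<in> measurable (param_space d G) (param_space d G)"
    and distr_relabel: "distr (param_space d G) (param_space d G) (relabel d G \<sigma>) = param_space d G"
proof -
  let ?P = "param_space d G" and ?I = "{..<param_dim d G}"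
  let ?r = "\<lambda>\<theta>. \<lambda>i\<in>?I. \<theta> (relabel_index d G \<sigma> i)"
  have bij: "bij_betw (relabel_index d G \<sigma>) ?I ?I"
    using \<sigma> G by (rule bij_betw_relabel_index)
  have r: "?r \<in> measurable ?P ?P" "distr ?P ?P ?r = ?P"
    unfolding param_space_def using bij
    by (auto intro!: measurable_PiM_reindex distr_PiM_reindex_bij simp: bij_betw_def
        sigma_finite_lborel)
  obtain S where S: "S \<in> measurable ?P ?P" "distr ?P ?P S = ?P" "\<And>\<theta>. relabel d G \<sigma> \<theta> = S (?r \<theta>)"
  proof (cases "\<sigma> (G - 1) = G - 1")
    case True
    then show ?thesis
      using that[of "\<lambda>x. x"] relabel_eq_reindex[OF \<sigma>] by simp
  next
    case False
    obtain j where "j < G" "\<sigma> j = G - 1"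
      using permutes_image[OF \<sigma>] G by (metis imageE lessThan_iff diff_less zero_less_one less_le_trans)
    moreover from this False have "j \<noteq> G - 1"
      by auto
    ultimately have j: "j < G - 1" "\<sigma> j = G - 1"
      by linarith+
    let ?c = "G * d + j" and ?J = "(+) (G * d) ` ({..<G - 1} - {j})"
    have c: "?c \<in> ?I" "?J \<subseteq> ?I - {?c}"
      using j by (auto simp: param_dim_def)
    show ?thesis
    proof (rule that)
      show "(\<lambda>x. x(?c := 1 - x ?c - (\<Sum>h\<in>?J. x h))) \<in> measurable ?P ?P"
        unfolding param_space_def using c by (intro measurable_PiM_shear) auto
      show "distr ?P ?P (\<lambda>x. x(?c := 1 - x ?c - (\<Sum>h\<in>?J. x h))) = ?P"
        unfolding param_space_def using c by (intro distr_PiM_lborel_shear) auto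
      show "relabel d G \<sigma> \<theta> = (?r \<theta>)(?c := 1 - ?r \<theta> ?c - (\<Sum>h\<in>?J. ?r \<theta> h))" for \<theta>
        using relabel_eq_shear_reindex[OF \<sigma> G j] by simp
    qed
  qed
  have "relabel d G \<sigma> = S \<circ> ?r"
    using S(3) by (simp add: fun_eq_iff)
  then show "relabel d G \<sigma> \<in> measurable ?P ?P" "distr ?P ?P (relabel d G \<sigma>) = ?P"
    using measurable_comp[OF r(1) S(1)] distr_distr[OF S(1) r(1)] r(2) S(2) by simp_all
qed

lemma sum_mix_tau:
  assumes "G \<ge> 1"
  shows "(\<Sum>g<G. mix_tau d G \<theta> g) = 1"
proof -
  have "{..<G} = insert (G - 1) {..<G - 1}"
    using assms by auto
  moreover have "(\<Sum>g<G - 1. mix_tau d G \<theta> g) = (\<Sum>g<G - 1. \<theta> (G * d + g))"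
    by (intro sum.cong) (auto simp: mix_tau_def)
  ultimately show ?thesis
    by (simp add: mix_tau_def)
qed

lemma mix_tau_relabel:
  assumes \<tau>: "\<tau> permutes {..<G}" and G: "G \<ge> 1" and g: "g < G"
  shows "mix_tau d G (relabel d G \<tau> \<theta>) g = mix_tau d G \<theta> (\<tau> g)"
proof (cases "g < G - 1")
  case False
  have "(\<Sum>h<G - 1. relabel d G \<tau> \<theta> (G * d + h)) = (\<Sum>h<G - 1. mix_tau d G \<theta> (\<tau> h))"
    by (intro sum.cong) (auto simp: relabel_def)
  moreover have "(\<Sum>h<G. mix_tau d G \<theta> (\<tau> h)) = 1"
    using sum.permute[OF \<tau>, of "mix_tau d G \<theta>"] sum_mix_tau[OF G] by (simp add: comp_def)
  moreover have "{..<G} = insert (G - 1) {..<G - 1}" "g = G - 1"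
    using G g False by auto
  ultimately show ?thesis
    by (simp add: mix_tau_def)
qed (simp add: mix_tau_def relabel_def)

lemma relabel_relabel:
  assumes \<sigma>: "\<sigma> permutes {..<G}" and \<tau>: "\<tau> permutes {..<G}" and G: "G \<ge> 1"
  shows "relabel d G \<sigma> (relabel d G \<tau> \<theta>) = relabel d G (\<tau> \<circ> \<sigma>) \<theta>"
proof
  fix i
  show "relabel d G \<sigma> (relabel d G \<tau> \<theta>) i = relabel d G (\<tau> \<circ> \<sigma>) \<theta> i"
  proof (cases "i < G * d")
    case True
    then have "d > 0"
      by (auto intro: gr0I)
    then show ?thesis
      using True permutes_block_index_less[OF \<sigma> True] by (simp add: relabel_def)
  next
    case False
    then show ?thesis
      using permutes_in_image[OF \<sigma>, of "i - G * d"] mix_tau_relabel[OF \<tau> G] G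
      by (auto simp: relabel_def)
  qed
qed

section \<open>The symmetrised density\<close>

lemma thames_sym_eq_sum_sym_density:
  "thames_sym d G B pL T \<theta>s
     = (1 / (real T / 2)) * (\<Sum>t\<in>{T div 2 + 1..T}. sym_density d G B (\<theta>s t) / pL (\<theta>s t))"
proof -
  let ?P = "{\<sigma>. \<sigma> permutes {..<G}}" and ?T = "{T div 2 + 1..T}"
  let ?V = "measure (param_space d G) B"
  let ?a = "\<lambda>\<sigma> t. indicator B (relabel d G \<sigma> (\<theta>s t)) / ?V / pL (\<theta>s t)"
  have "(\<Sum>t\<in>{t\<in>?T. relabel d G \<sigma> (\<theta>s t) \<in> B}. (1 / ?V) / pL (\<theta>s t)) = (\<Sum>t\<in>?T. ?a \<sigma> t)" for \<sigma>
    unfolding sum.inter_filter[OF finite_atLeastAtMost] by (intro sum.cong) auto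
  then have "thames_sym d G B pL T \<theta>s = (1 / fact G) * (\<Sum>\<sigma>\<in>?P. (1 / (real T / 2)) * (\<Sum>t\<in>?T. ?a \<sigma> t))"
    by (simp add: thames_sym_def)
  also have "\<dots> = (1 / (real T / 2)) * (\<Sum>t\<in>?T. (1 / fact G) * (\<Sum>\<sigma>\<in>?P. ?a \<sigma> t))"
    by (simp only: sum_distrib_left sum.swap[of _ ?P] mult.left_commute)
  also have "\<dots> = (1 / (real T / 2)) * (\<Sum>t\<in>?T. sym_density d G B (\<theta>s t) / pL (\<theta>s t))"
    by (simp add: sym_density_def sum_divide_distrib mult_ac)
  finally show ?thesis .
qed

lemma sym_density_relabel:
  assumes "\<tau> permutes {..<G}" "G \<ge> 1"
  shows "sym_density d G B (relabel d G \<tau> \<theta>) = sym_density d G B \<theta>"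
proof -
  have "(\<Sum>\<sigma>\<in>{\<sigma>. \<sigma> permutes {..<G}}. indicator B (relabel d G \<sigma> (relabel d G \<tau> \<theta>)) / measure (param_space d G) B)
      = (\<Sum>\<sigma>\<in>{\<sigma>. \<sigma> permutes {..<G}}. indicator B (relabel d G (\<tau> \<circ> \<sigma>) \<theta>) / measure (param_space d G) B)"
    using relabel_relabel[OF _ assms(1,2)] by (intro sum.cong) auto
  also have "\<dots> = (\<Sum>\<sigma>\<in>{\<sigma>. \<sigma> permutes {..<G}}. indicator B (relabel d G \<sigma> \<theta>) / measure (param_space d G) B)"
    by (rule setum_permutations_compose_left[OF assms(1), symmetric])
  finally show ?thesis
    by (simp add: sym_density_def)
qed

lemma card_permutations_lessThan: "card {\<sigma>. \<sigma> permutes {..<G}} = fact G"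
  using card_permutations[of "{..<G}" G] by simp

lemma sym_density_nonneg: "0 \<le> sym_density d G B \<theta>"
  unfolding sym_density_def by (auto intro!: sum_nonneg divide_nonneg_nonneg)

lemma sym_density_le: "sym_density d G B \<theta> \<le> 1 / measure (param_space d G) B"
proof -
  have "(\<Sum>\<sigma>\<in>{\<sigma>. \<sigma> permutes {..<G}}. indicator B (relabel d G \<sigma> \<theta>) / measure (param_space d G) B)
      \<le> (\<Sum>\<sigma>\<in>{\<sigma>. \<sigma> permutes {..<G}}. 1 / measure (param_space d G) B)"
    by (intro sum_mono divide_right_mono) (auto simp: indicator_def)
  then show ?thesis
    unfolding sym_density_def by (simp add: card_permutations_lessThan field_simps)
qed

lemma sym_density_nonzeroE:
  assumes "sym_density d G B \<theta> \<noteq> 0"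
  obtains \<sigma> where "\<sigma> permutes {..<G}" "relabel d G \<sigma> \<theta> \<in> B"
proof -
  have "\<exists>\<sigma>. \<sigma> permutes {..<G} \<and> relabel d G \<sigma> \<theta> \<in> B"
  proof (rule ccontr)
    assume "\<nexists>\<sigma>. \<sigma> permutes {..<G} \<and> relabel d G \<sigma> \<theta> \<in> B"
    then have "sym_density d G B \<theta> = 0"
      unfolding sym_density_def by (auto intro!: sum.neutral)
    with assms show False ..
  qed
  with that show ?thesis
    by blast
qed

lemma borel_measurable_sym_density:
  assumes "G \<ge> 1" "B \<in> sets (param_space d G)"
  shows "sym_density d G B \<in> borel_measurable (param_space d G)"
  unfolding sym_density_def
  using measurable_compose[OF measurable_relabel[OF _ assms(1)] borel_measurable_indicator[OF assms(2)]]
  by (intro borel_measurable_times borel_measurable_const borel_measurable_sum borel_measurable_divide)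
    auto

lemma nn_integral_indicator_relabel:
  assumes "\<sigma> permutes {..<G}" "G \<ge> 1" "B \<in> sets (param_space d G)"
  shows "(\<integral>\<^sup>+\<theta>. indicator B (relabel d G \<sigma> \<theta>) \<partial>param_space d G) = emeasure (param_space d G) B"
proof -
  have "(\<integral>\<^sup>+\<theta>. indicator B (relabel d G \<sigma> \<theta>) \<partial>param_space d G)
      = (\<integral>\<^sup>+\<theta>. indicator B \<theta> \<partial>distr (param_space d G) (param_space d G) (relabel d G \<sigma>))"
    using assms by (intro nn_integral_distr[symmetric] measurable_relabel) auto
  then show ?thesis
    using assms by (simp add: distr_relabel)
qed

lemma nn_integral_sym_density:
  assumes G: "G \<ge> 1" and B: "B \<in> sets (param_space d G)"
    and B_pos: "0 < emeasure (param_space d G) B" and B_fin: "emeasure (param_space d G) B < \<infinity>"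
  shows "(\<integral>\<^sup>+\<theta>. ennreal (sym_density d G B \<theta>) \<partial>param_space d G) = 1"
proof -
  let ?\<Theta> = "param_space d G" and ?P = "{\<sigma>. \<sigma> permutes {..<G}}"
  let ?V = "measure ?\<Theta> B"
  define c where "c = 1 / (fact G * ?V)"
  have V: "emeasure ?\<Theta> B = ennreal ?V"
    using B_fin by (simp add: emeasure_eq_ennreal_measure)
  with B_pos have "?V > 0"
    by simp
  then have c: "c \<ge> 0" "fact G * c * ?V = 1"
    by (auto simp: c_def)
  have ind: "(\<lambda>\<theta>. indicator B (relabel d G \<sigma> \<theta>) :: ennreal) \<in> borel_measurable ?\<Theta>"
    if "\<sigma> \<in> ?P" for \<sigma>
    using measurable_compose[OF measurable_relabel[OF _ G] borel_measurable_indicator[OF B]] that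
    by simp
  have density: "ennreal (sym_density d G B \<theta>) = (\<Sum>\<sigma>\<in>?P. ennreal c * indicator B (relabel d G \<sigma> \<theta>))"
    for \<theta>
  proof -
    have "sym_density d G B \<theta> = (\<Sum>\<sigma>\<in>?P. c * indicator B (relabel d G \<sigma> \<theta>))"
      unfolding sym_density_def c_def sum_distrib_left by simp
    then have "ennreal (sym_density d G B \<theta>) = (\<Sum>\<sigma>\<in>?P. ennreal (c * indicator B (relabel d G \<sigma> \<theta>)))"
      using c(1) by (simp add: sum_ennreal)
    also have "\<dots> = (\<Sum>\<sigma>\<in>?P. ennreal c * indicator B (relabel d G \<sigma> \<theta>))"
      by (intro sum.cong) (auto simp: indicator_def)
    finally show ?thesis .
  qed
  have "(\<integral>\<^sup>+\<theta>. ennreal (sym_density d G B \<theta>) \<partial>?\<Theta>)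
      = (\<Sum>\<sigma>\<in>?P. ennreal c * (\<integral>\<^sup>+\<theta>. indicator B (relabel d G \<sigma> \<theta>) \<partial>?\<Theta>))"
    unfolding density using ind by (subst nn_integral_sum) (auto intro!: sum.cong nn_integral_cmult)
  also have "\<dots> = (\<Sum>\<sigma>\<in>?P. ennreal c * emeasure ?\<Theta> B)"
    using B G by (simp add: nn_integral_indicator_relabel)
  also have "\<dots> = ennreal (fact G * c * ?V)"
    using c(1) \<open>?V > 0\<close>
    by (simp add: V card_permutations_lessThan ennreal_of_nat_eq_real_of_nat ennreal_mult mult_ac)
  finally show ?thesis
    using c by simp
qed

lemma sym_density_nonzero_imp_less:
  assumes "\<And>\<sigma>. \<sigma> permutes {..<G} \<Longrightarrow> pL (relabel d G \<sigma> \<theta>) = pL \<theta>"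
    and "\<forall>\<theta>\<in>B. q < pL \<theta>" and "sym_density d G B \<theta> \<noteq> 0"
  shows "q < pL \<theta>"
proof -
  obtain \<sigma> where "\<sigma> permutes {..<G}" "relabel d G \<sigma> \<theta> \<in> B"
    using sym_density_nonzeroE[OF assms(3)] .
  with assms(1,2) show ?thesis
    by force
qed

lemma sym_density_div_bounded:
  assumes inv: "\<And>\<sigma>. \<sigma> permutes {..<G} \<Longrightarrow> pL (relabel d G \<sigma> \<theta>) = pL \<theta>"
    and B_q: "\<forall>\<theta>\<in>B. q < pL \<theta>" and q: "0 < q"
  shows "sym_density d G B \<theta> / pL \<theta> \<in> {0..1 / (measure (param_space d G) B * q)}"
proof (cases "sym_density d G B \<theta> = 0")
  case False
  with inv B_q have pL: "q < pL \<theta>"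
    by (rule sym_density_nonzero_imp_less)
  then have "sym_density d G B \<theta> / pL \<theta> \<le> (1 / measure (param_space d G) B) / q"
    using q by (intro frac_le sym_density_le sym_density_nonneg) auto
  with pL q show ?thesis
    using sym_density_nonneg[of d G B \<theta>] by simp
qed (use q in simp)

lemma thames_sym_relabelled_eq:
  assumes "G \<ge> 1" and "\<And>t. \<tau>s t permutes {..<G}"
    and "\<And>t. pL (relabel d G (\<tau>s t) (\<theta>s t)) = pL (\<theta>s t)"
  shows "thames_sym d G B pL T (\<lambda>t. relabel d G (\<tau>s t) (\<theta>s t))
     = (1 / (real T / 2)) * (\<Sum>t\<in>{T div 2 + 1..T}. sym_density d G B (\<theta>s t) / pL (\<theta>s t))"
  using assms by (simp add: thames_sym_eq_sum_sym_density sym_density_relabel)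

section \<open>Averages of bounded i.i.d. importance ratios\<close>

lemma (in prob_space) expectation_importance_ratio:
  fixes p h :: "'b \<Rightarrow> real"
  assumes X: "X \<in> measurable M N" and X_distr: "distr M N X = density N (\<lambda>x. ennreal (p x / Z))"
    and [measurable]: "p \<in> borel_measurable N" "h \<in> borel_measurable N"
    and p_nonneg: "\<And>x. x \<in> space N \<Longrightarrow> 0 \<le> p x" and h_nonneg: "\<And>x. x \<in> space N \<Longrightarrow> 0 \<le> h x"
    and support: "\<And>x. x \<in> space N \<Longrightarrow> h x \<noteq> 0 \<Longrightarrow> 0 < p x"
    and h_density: "(\<integral>\<^sup>+x. ennreal (h x) \<partial>N) = 1" and Z: "0 < Z"
  shows "expectation (\<lambda>\<omega>. h (X \<omega>) / p (X \<omega>)) = 1 / Z"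
proof -
  have "expectation (\<lambda>\<omega>. h (X \<omega>) / p (X \<omega>)) = (\<integral>x. h x / p x \<partial>density N (\<lambda>x. ennreal (p x / Z)))"
    using X by (simp add: integral_distr flip: X_distr)
  also have "\<dots> = (\<integral>x. p x / Z * (h x / p x) \<partial>N)"
    using p_nonneg Z by (subst integral_density) (auto intro!: AE_I2)
  also have "\<dots> = (\<integral>x. h x / Z \<partial>N)"
  proof (intro Bochner_Integration.integral_cong refl)
    fix x assume "x \<in> space N"
    then show "p x / Z * (h x / p x) = h x / Z"
      using support[of x] by (cases "h x = 0") auto
  qed
  also have "\<dots> = (\<integral>x. h x \<partial>N) / Z"
    by simp
  also have "(\<integral>x. h x \<partial>N) = 1"
    using h_density h_nonneg by (subst integral_eq_nn_integral) auto
  finally show ?thesis .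
qed

lemma char_centred_normal:
  assumes "s \<ge> 0"
  shows "char (centred_normal s) t = complex_of_real (exp (- ((s * t)\<^sup>2) / 2))"
proof (cases "s = 0")
  case True
  then show ?thesis
    by (simp add: centred_normal_def char_def integral_return)
next
  case False
  with assms have s: "s > 0"
    by simp
  interpret std: prob_space std_normal_distribution
    using real_dist_normal_dist by (simp add: real_distribution_def)
  have "distributed std_normal_distribution lborel (\<lambda>x. x) std_normal_density"
    by (simp add: distributed_def distr_id2)
  from std.normal_density_affine[OF this, where \<alpha> = s and \<beta> = 0] s
  have "distributed std_normal_distribution lborel (\<lambda>x. s * x) (normal_density 0 s)"
    by simp
  then have "centred_normal s = distr std_normal_distribution lborel (\<lambda>x. s * x)"
    using s by (simp add: distributed_def centred_normal_def)
  then have "char (centred_normal s) t = char std_normal_distribution (s * t)"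
    by (simp add: char_def integral_distr mult_ac)
  then show ?thesis
    by (simp add: char_std_normal_distribution)
qed

lemma real_distribution_centred_normal:
  assumes "s \<ge> 0"
  shows "real_distribution (centred_normal s)"
proof (cases "s = 0")
  case True
  then show ?thesis
    by (simp add: centred_normal_def real_distribution_def real_distribution_axioms_def prob_space_return)
next
  case False
  with assms show ?thesis
    using prob_space_normal_density[of s 0]
    by (simp add: centred_normal_def real_distribution_def real_distribution_axioms_def)
qed

locale bounded_iid = prob_space +
  fixes Y :: "nat \<Rightarrow> 'a \<Rightarrow> real" and a b :: real
  assumes indep_Y: "indep_vars (\<lambda>_. borel) Y UNIV"
    and distr_Y: "\<And>t. distr M borel (Y t) = distr M borel (Y 0)"
    and Y_bounded: "\<And>t \<omega>. \<omega> \<in> space M \<Longrightarrow> Y t \<omega> \<in> {a..b}"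
begin

definition \<mu> :: real where "\<mu> = expectation (Y 0)"

text \<open>For a sample of size \<open>T = 2 * N\<close> these are the draws \<open>t = T/2 + 1, \<dots>, T\<close>.\<close>
definition window_mean :: "nat \<Rightarrow> 'a \<Rightarrow> real" where
  "window_mean N \<omega> = (\<Sum>t\<in>{N+1..2*N}. Y t \<omega>) / real N"

lemma random_variable_Y[measurable]: "Y t \<in> borel_measurable M"
  using indep_Y unfolding indep_vars_def2 by auto

lemma distr_Y_compose:
  assumes [measurable]: "g \<in> borel_measurable borel"
  shows "distr M borel (\<lambda>\<omega>. g (Y t \<omega>)) = distr M borel (\<lambda>\<omega>. g (Y 0 \<omega>))"
proof -
  have "distr M borel (\<lambda>\<omega>. g (Y t \<omega>)) = distr (distr M borel (Y t)) borel g"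
    by (simp add: distr_distr comp_def)
  also have "\<dots> = distr M borel (\<lambda>\<omega>. g (Y 0 \<omega>))"
    by (subst distr_Y) (simp add: distr_distr comp_def)
  finally show ?thesis .
qed

lemma abs_Y_le: "\<omega> \<in> space M \<Longrightarrow> \<bar>Y t \<omega>\<bar> \<le> \<bar>a\<bar> + \<bar>b\<bar>"
  using Y_bounded[of \<omega> t] by (auto simp: abs_le_iff)

lemma lower_le_upper: "a \<le> b"
proof -
  obtain \<omega> where "\<omega> \<in> space M"
    using not_empty by blast
  then show ?thesis
    using Y_bounded[of \<omega> 0] by simp
qed

lemma integrable_Y: "integrable M (Y t)"
  using abs_Y_le by (intro integrable_const_bound[where B = "\<bar>a\<bar> + \<bar>b\<bar>"] AE_I2) auto

lemma expectation_Y: "expectation (Y t) = \<mu>"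
proof -
  have "expectation (Y t) = (\<integral>x. x \<partial>distr M borel (Y t))"
    by (simp add: integral_distr)
  also have "\<dots> = (\<integral>x. x \<partial>distr M borel (Y 0))"
    by (simp only: distr_Y[of t])
  also have "\<dots> = \<mu>"
    by (simp add: integral_distr \<mu>_def)
  finally show ?thesis .
qed

lemma window_mean_bounded:
  assumes "N > 0" "\<omega> \<in> space M"
  shows "window_mean N \<omega> \<in> {a..b}"
proof -
  have "(\<Sum>t\<in>{N+1..2*N}. a) \<le> (\<Sum>t\<in>{N+1..2*N}. Y t \<omega>)"
    by (rule sum_mono) (use Y_bounded[OF assms(2)] in auto)
  moreover have "(\<Sum>t\<in>{N+1..2*N}. Y t \<omega>) \<le> (\<Sum>t\<in>{N+1..2*N}. b)"
    by (rule sum_mono) (use Y_bounded[OF assms(2)] in auto)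
  ultimately show ?thesis
    using assms(1)
    by (simp add: window_mean_def field_simps)
qed

lemma window_mean_measurable[measurable]: "window_mean N \<in> borel_measurable M"
  unfolding window_mean_def by measurable

lemma integrable_window_mean_square: "integrable M (\<lambda>\<omega>. (window_mean N \<omega>)\<^sup>2)"
proof (rule integrable_const_bound[where B = "(\<bar>a\<bar> + \<bar>b\<bar>)\<^sup>2"])
  have "\<bar>window_mean N \<omega>\<bar> \<le> \<bar>a\<bar> + \<bar>b\<bar>" if "\<omega> \<in> space M" for \<omega>
    using window_mean_bounded[OF _ that, of N] by (cases "N = 0") (auto simp: window_mean_def)
  then show "AE \<omega> in M. norm ((window_mean N \<omega>)\<^sup>2) \<le> (\<bar>a\<bar> + \<bar>b\<bar>)\<^sup>2"
    by (auto intro!: AE_I2 power_mono simp: abs_le_square_iff[symmetric] power_abs)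
qed simp

lemma integrable_window_mean: "integrable M (window_mean N)"
  unfolding window_mean_def using integrable_Y by simp

lemma expectation_window_mean:
  assumes "N > 0"
  shows "expectation (window_mean N) = \<mu>"
  unfolding window_mean_def using assms by (simp add: integrable_Y expectation_Y)

lemma prob_window_mean_deviation:
  assumes "N > 0" "\<epsilon> \<ge> 0"
  shows "prob {\<omega> \<in> space M. \<bar>window_mean N \<omega> - \<mu>\<bar> \<ge> \<epsilon>} \<le> 2 * exp (-2 * real N * \<epsilon>\<^sup>2 / (b + 1 - a)\<^sup>2)"
proof -
  txt \<open>Hoeffding's bound needs a nondegenerate interval, hence \<open>b + 1\<close>.\<close>
  interpret Hoeffding_ineq_iid M "{N+1..2*N}" Y "Y 0" a "b + 1" \<mu>
  proof unfold_locales
    show "indep_vars (\<lambda>_. borel) Y {N+1..2*N}"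
      using indep_Y by (rule indep_vars_subset) auto
    show "AE \<omega> in M. Y 0 \<omega> \<in> {a..b + 1}"
      using Y_bounded[of _ 0] by (intro AE_I2) fastforce
  qed (auto intro: distr_Y simp: \<mu>_def)
  show ?thesis
    using Hoeffding_ineq_abs_ge'[OF assms(2)] assms(1) lower_le_upper by (simp add: window_mean_def)
qed

lemma AE_window_mean_eventually_close:
  assumes "\<epsilon> > 0"
  shows "AE \<omega> in M. eventually (\<lambda>N. \<bar>window_mean N \<omega> - \<mu>\<bar> < \<epsilon>) sequentially"
proof -
  define A where "A N = {\<omega> \<in> space M. \<bar>window_mean N \<omega> - \<mu>\<bar> \<ge> \<epsilon>}" for N
  have A[measurable]: "A N \<in> sets M" for N
    unfolding A_def by measurable
  define q where "q = exp (-2 * \<epsilon>\<^sup>2 / (b + 1 - a)\<^sup>2)"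
  have q: "0 < q" "q < 1"
    using assms lower_le_upper by (auto simp: q_def)
  have "summable (\<lambda>N. 2 * q ^ N)"
    using q by (intro summable_mult summable_geometric) auto
  then have "summable (\<lambda>N. measure M (A N))"
  proof (rule summable_comparison_test'[where N = 1])
    fix N :: nat assume "N \<ge> 1"
    then have "measure M (A N) \<le> 2 * exp (-2 * real N * \<epsilon>\<^sup>2 / (b + 1 - a)\<^sup>2)"
      unfolding A_def using prob_window_mean_deviation[of N \<epsilon>] assms by simp
    also have "exp (-2 * real N * \<epsilon>\<^sup>2 / (b + 1 - a)\<^sup>2) = q ^ N"
      unfolding q_def by (subst exp_of_nat_mult[symmetric]) (simp add: field_simps)
    finally show "norm (measure M (A N)) \<le> 2 * q ^ N"
      by simp
  qed
  then have "AE \<omega> in M. eventually (\<lambda>N. \<omega> \<in> space M - A N) sequentially"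
    using borel_cantelli_AE1[OF A] by (simp add: emeasure_eq_measure)
  then show ?thesis
    by (rule eventually_mono) (auto simp: A_def elim!: eventually_mono)
qed

text \<open>Hoeffding's tail bound is summable in \<open>N\<close>, so Borel--Cantelli yields a strong law for the
  windows.\<close>
lemma AE_window_mean_tendsto: "AE \<omega> in M. (\<lambda>N. window_mean N \<omega>) \<longlonglongrightarrow> \<mu>"
proof -
  have "AE \<omega> in M. \<forall>k::nat. eventually (\<lambda>N. \<bar>window_mean N \<omega> - \<mu>\<bar> < 1 / Suc k) sequentially"
    by (subst AE_all_countable) (auto intro: AE_window_mean_eventually_close)
  then show ?thesis
  proof (rule eventually_mono)
    fix \<omega> assume close: "\<forall>k::nat. eventually (\<lambda>N. \<bar>window_mean N \<omega> - \<mu>\<bar> < 1 / Suc k) sequentially"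
    show "(\<lambda>N. window_mean N \<omega>) \<longlonglongrightarrow> \<mu>"
    proof (rule tendstoI)
      fix e :: real assume "e > 0"
      then obtain k where k: "1 / Suc k < e"
        using nat_approx_posE by blast
      show "eventually (\<lambda>N. dist (window_mean N \<omega>) \<mu> < e) sequentially"
        using close[rule_format, of k] by (rule eventually_mono) (use k in \<open>auto simp: dist_real_def\<close>)
    qed
  qed
qed

definition std_dev :: real where "std_dev = sqrt (variance (Y 0))"

lemma std_dev_nonneg: "std_dev \<ge> 0"
proof -
  have "variance (Y 0) \<ge> 0"
    by (rule integral_nonneg_AE) simp
  then show ?thesis
    by (simp add: std_dev_def)
qed

lemma integrable_Y_square: "integrable M (\<lambda>\<omega>. (Y t \<omega>)\<^sup>2)"
  using abs_Y_le
  by (intro integrable_const_bound[where B = "(\<bar>a\<bar> + \<bar>b\<bar>)\<^sup>2"] AE_I2)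
    (auto simp: abs_le_square_iff[symmetric] power_abs intro!: power_mono)

lemma variance_Y: "variance (Y t) = std_dev\<^sup>2"
proof -
  have "variance (Y t) = (\<integral>x. x \<partial>distr M borel (\<lambda>\<omega>. (Y t \<omega> - \<mu>)\<^sup>2))"
    by (simp add: integral_distr expectation_Y)
  also have "\<dots> = (\<integral>x. x \<partial>distr M borel (\<lambda>\<omega>. (Y 0 \<omega> - \<mu>)\<^sup>2))"
    by (simp only: distr_Y_compose[of "\<lambda>x. (x - \<mu>)\<^sup>2" t] borel_measurable_power borel_measurable_diff
        borel_measurable_const measurable_ident_sets)
  also have "\<dots> = std_dev\<^sup>2"
    by (simp add: integral_distr std_dev_def \<mu>_def)
  finally show ?thesis .
qed

lemma char_distr_scaled_centred_sum:
  "char (distr M borel (\<lambda>\<omega>. \<Sum>i\<in>I. c * (Y i \<omega> - \<mu>))) t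
     = char (distr M borel (\<lambda>\<omega>. Y 0 \<omega> - \<mu>)) (c * t) ^ card I"
proof -
  have "char (distr M borel (\<lambda>\<omega>. c * (Y i \<omega> - \<mu>))) t = char (distr M borel (\<lambda>\<omega>. Y 0 \<omega> - \<mu>)) (c * t)"
    for i
  proof -
    have "distr M borel (\<lambda>\<omega>. c * (Y i \<omega> - \<mu>)) = distr M borel (\<lambda>\<omega>. c * (Y 0 \<omega> - \<mu>))"
      by (rule distr_Y_compose) simp
    then show ?thesis
      by (simp add: char_def integral_distr mult_ac)
  qed
  moreover have "indep_vars (\<lambda>_. borel) (\<lambda>i \<omega>. c * (Y i \<omega> - \<mu>)) I"
    by (rule indep_vars_subset[OF indep_vars_compose2[OF indep_Y]]) auto
  ultimately show ?thesis
    by (simp add: char_distr_sum)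
qed

lemma scaled_window_mean_eq_sum:
  "sqrt N * (window_mean N \<omega> - \<mu>) = (\<Sum>i\<in>{N+1..2*N}. (1 / sqrt N) * (Y i \<omega> - \<mu>))"
proof (cases "N = 0")
  case False
  let ?S = "\<Sum>i\<in>{N+1..2*N}. Y i \<omega>"
  have "sqrt N * (window_mean N \<omega> - \<mu>) = (?S - N * \<mu>) * (sqrt N / N)"
    using False by (simp add: window_mean_def field_simps)
  also have "\<dots> = (?S - N * \<mu>) / sqrt N"
    by (subst sqrt_divide_self_eq) (simp_all add: divide_inverse)
  also have "\<dots> = (\<Sum>i\<in>{N+1..2*N}. (1 / sqrt N) * (Y i \<omega> - \<mu>))"
    by (simp add: sum_subtractf sum_divide_distrib[symmetric])
  finally show ?thesis .
qed simp

lemma char_scaled_window_mean: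
  "char (distr M borel (\<lambda>\<omega>. sqrt N * (window_mean N \<omega> - \<mu>))) t
     = char (distr M borel (\<lambda>\<omega>. Y 0 \<omega> - \<mu>)) (t / sqrt N) ^ N"
  unfolding scaled_window_mean_eq_sum char_distr_scaled_centred_sum by simp

lemma char_centred_Y_degenerate:
  assumes "std_dev = 0"
  shows "char (distr M borel (\<lambda>\<omega>. Y 0 \<omega> - \<mu>)) u = 1"
proof -
  have "integrable M (\<lambda>\<omega>. (Y 0 \<omega> - \<mu>)\<^sup>2)"
    using integrable_Y_square[of 0] integrable_Y[of 0]
    by (simp add: power2_diff Bochner_Integration.integrable_diff)
  moreover have "(\<integral>\<omega>. (Y 0 \<omega> - \<mu>)\<^sup>2 \<partial>M) = 0"
    using assms variance_Y[of 0] expectation_Y[of 0] by simp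
  ultimately have Y0: "AE \<omega> in M. Y 0 \<omega> - \<mu> = 0"
    by (subst (asm) integral_nonneg_eq_0_iff_AE) auto
  have "char (distr M borel (\<lambda>\<omega>. Y 0 \<omega> - \<mu>)) u = (CLINT \<omega>|M. iexp (u * (Y 0 \<omega> - \<mu>)))"
    by (simp add: char_def integral_distr)
  also have "\<dots> = (CLINT \<omega>|M. 1)"
    by (rule integral_cong_AE) (use Y0 in \<open>auto elim!: eventually_mono\<close>)
  finally show ?thesis
    by (simp add: prob_space)
qed

text \<open>The window sum has the characteristic function \<open>\<psi> (t / sqrt N) ^ N\<close> of the prefix sum
  in the classical central limit theorem, \<open>\<psi>\<close> being that of \<open>Y 0 - \<mu>\<close>.\<close>
lemma tendsto_char_scaled_window_mean:
  "(\<lambda>N. char (distr M borel (\<lambda>\<omega>. sqrt N * (window_mean N \<omega> - \<mu>))) t)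
     \<longlonglongrightarrow> complex_of_real (exp (- ((std_dev * t)\<^sup>2) / 2))"
proof (cases "std_dev = 0")
  case True
  then show ?thesis
    by (simp add: char_scaled_window_mean char_centred_Y_degenerate)
next
  case False
  with std_dev_nonneg have s: "std_dev > 0"
    by simp
  have "weak_conv_m (\<lambda>n. distr M borel (\<lambda>\<omega>. (\<Sum>i<n. Y i \<omega> - \<mu>) / sqrt (n * std_dev\<^sup>2)))
      std_normal_distribution"
    using central_limit_theorem[OF indep_Y expectation_Y s integrable_Y_square variance_Y distr_Y]
    by simp
  then have "(\<lambda>n. char (distr M borel (\<lambda>\<omega>. (\<Sum>i<n. Y i \<omega> - \<mu>) / sqrt (n * std_dev\<^sup>2))) (std_dev * t))
      \<longlonglongrightarrow> char std_normal_distribution (std_dev * t)"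
    by (intro levy_continuity1 real_dist_normal_dist) simp_all
  moreover have "char (distr M borel (\<lambda>\<omega>. (\<Sum>i<n. Y i \<omega> - \<mu>) / sqrt (n * std_dev\<^sup>2))) (std_dev * t)
      = char (distr M borel (\<lambda>\<omega>. sqrt n * (window_mean n \<omega> - \<mu>))) t" for n
  proof -
    have sum: "(\<lambda>\<omega>. (\<Sum>i<n. Y i \<omega> - \<mu>) / sqrt (n * std_dev\<^sup>2))
        = (\<lambda>\<omega>. \<Sum>i<n. (1 / sqrt (n * std_dev\<^sup>2)) * (Y i \<omega> - \<mu>))"
      by (simp add: sum_divide_distrib)
    have "1 / sqrt (n * std_dev\<^sup>2) * (std_dev * t) = t / sqrt n"
      using s by (simp add: real_sqrt_mult)
    then show ?thesis
      unfolding sum char_distr_scaled_centred_sum char_scaled_window_mean by simp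
  qed
  ultimately show ?thesis
    by (simp add: char_std_normal_distribution)
qed

lemma weak_conv_scaled_window_mean:
  "weak_conv_m (\<lambda>N. distr M borel (\<lambda>\<omega>. sqrt N * (window_mean N \<omega> - \<mu>))) (centred_normal std_dev)"
proof (rule levy_continuity)
  show "real_distribution (distr M borel (\<lambda>\<omega>. sqrt N * (window_mean N \<omega> - \<mu>)))" for N
    by (rule real_distribution_distr) simp
  show "real_distribution (centred_normal std_dev)"
    by (rule real_distribution_centred_normal[OF std_dev_nonneg])
  show "(\<lambda>N. char (distr M borel (\<lambda>\<omega>. sqrt N * (window_mean N \<omega> - \<mu>))) t) \<longlonglongrightarrow> char (centred_normal std_dev) t"
    for t
    using tendsto_char_scaled_window_mean by (simp add: char_centred_normal[OF std_dev_nonneg])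
qed

lemma window_estimator_properties:
  assumes est: "\<And>T \<omega>. even T \<Longrightarrow> \<omega> \<in> space M \<Longrightarrow> est T \<omega> = window_mean (T div 2) \<omega>"
  shows "even T \<Longrightarrow> 0 < T \<Longrightarrow>
      integrable M (est T) \<and> integrable M (\<lambda>\<omega>. (est T \<omega>)\<^sup>2) \<and> expectation (est T) = \<mu>"
    and "AE \<omega> in M. (\<lambda>N. est (2 * N) \<omega>) \<longlonglongrightarrow> \<mu>"
    and "weak_conv_m (\<lambda>N. distr M borel (\<lambda>\<omega>. sqrt (real (2 * N) / 2) * (est (2 * N) \<omega> - \<mu>)))
      (centred_normal std_dev)"
proof -
  assume T: "even T" "0 < T"
  then have "0 < T div 2"
    by (auto elim: evenE)
  have "integrable M (est T) \<longleftrightarrow> integrable M (window_mean (T div 2))"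
    using est[OF T(1)] by (intro Bochner_Integration.integrable_cong) auto
  moreover have "integrable M (\<lambda>\<omega>. (est T \<omega>)\<^sup>2) \<longleftrightarrow> integrable M (\<lambda>\<omega>. (window_mean (T div 2) \<omega>)\<^sup>2)"
    using est[OF T(1)] by (intro Bochner_Integration.integrable_cong) auto
  moreover have "expectation (est T) = expectation (window_mean (T div 2))"
    using est[OF T(1)] by (intro Bochner_Integration.integral_cong) auto
  ultimately show "integrable M (est T) \<and> integrable M (\<lambda>\<omega>. (est T \<omega>)\<^sup>2) \<and> expectation (est T) = \<mu>"
    using integrable_window_mean integrable_window_mean_square expectation_window_mean[OF \<open>0 < T div 2\<close>]
    by simp
next
  show "AE \<omega> in M. (\<lambda>N. est (2 * N) \<omega>) \<longlonglongrightarrow> \<mu>"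
    by (rule AE_mp[OF AE_window_mean_tendsto AE_I2]) (simp add: est)
next
  have "distr M borel (\<lambda>\<omega>. sqrt (real (2 * N) / 2) * (est (2 * N) \<omega> - \<mu>))
      = distr M borel (\<lambda>\<omega>. sqrt N * (window_mean N \<omega> - \<mu>))" for N
    using est[of "2 * N"] by (intro distr_cong) auto
  then show "weak_conv_m (\<lambda>N. distr M borel (\<lambda>\<omega>. sqrt (real (2 * N) / 2) * (est (2 * N) \<omega> - \<mu>)))
      (centred_normal std_dev)"
    using weak_conv_scaled_window_mean by simp
qed

end

lemma (in prob_space) bounded_iid_compose:
  assumes "indep_vars (\<lambda>_. N) X UNIV" and "\<And>t. distr M N (X t) = distr M N (X 0)"
    and [measurable]: "f \<in> borel_measurable N" and "\<And>x. x \<in> space N \<Longrightarrow> f x \<in> {a..b}"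
  shows "bounded_iid M (\<lambda>t \<omega>. f (X t \<omega>)) a b"
proof
  have X[measurable]: "X t \<in> measurable M N" for t
    using assms(1) by (simp add: indep_vars_def2)
  show "indep_vars (\<lambda>_. borel) (\<lambda>t \<omega>. f (X t \<omega>)) UNIV"
    using assms(1) by (rule indep_vars_compose2) simp
  show "distr M borel (\<lambda>\<omega>. f (X t \<omega>)) = distr M borel (\<lambda>\<omega>. f (X 0 \<omega>))" for t
    using distr_distr[OF assms(3) X, of t] distr_distr[OF assms(3) X, of 0] assms(2)[of t]
    by (simp add: comp_def)
  show "f (X t \<omega>) \<in> {a..b}" if "\<omega> \<in> space M" for t \<omega>
    using assms(4) measurable_space[OF X that] .
qed

theorem mainTheorem4:
  fixes d G n :: nat
    and f :: "'y \<Rightarrow> (nat \<Rightarrow> real) \<Rightarrow> real" and Y :: "nat \<Rightarrow> 'y"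
    and prior :: "(nat \<Rightarrow> real) \<Rightarrow> real"
    and Z q :: real and B :: "(nat \<Rightarrow> real) set"
    and M :: "'w measure" and X :: "nat \<Rightarrow> 'w \<Rightarrow> (nat \<Rightarrow> real)"
    and \<sigma>s :: "nat \<Rightarrow> nat \<Rightarrow> 'w \<Rightarrow> (nat \<Rightarrow> nat)"
  defines "L \<equiv> mix_lik d G f Y n"
    and "\<Theta> \<equiv> param_space d G"
  assumes G: "G \<ge> 1"
    and prior_nonneg: "\<forall>\<theta>\<in>space \<Theta>. 0 \<le> prior \<theta>"
    and post_nonneg: "\<forall>\<theta>\<in>space \<Theta>. 0 \<le> prior \<theta> * L \<theta>"
    and post_meas: "(\<lambda>\<theta>. prior \<theta> * L \<theta>) \<in> borel_measurable \<Theta>"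
    and invariant: "\<forall>\<sigma>. \<sigma> permutes {..<G} \<longrightarrow>
        (\<forall>\<theta>\<in>space \<Theta>. prior (relabel d G \<sigma> \<theta>) * L (relabel d G \<sigma> \<theta>) = prior \<theta> * L \<theta>)"
    and Z_int: "integrable \<Theta> (\<lambda>\<theta>. prior \<theta> * L \<theta>)"
    and Z_def: "Z = (\<integral>\<theta>. prior \<theta> * L \<theta> \<partial>\<Theta>)"
    and Z_pos: "0 < Z"
    and B_meas: "B \<in> sets \<Theta>"
    and B_pos: "0 < emeasure \<Theta> B" and B_fin: "emeasure \<Theta> B < \<infinity>"
    and q_pos: "0 < q"
    and B_q: "\<forall>\<theta>\<in>B. prior \<theta> * L \<theta> > q"
    and M: "prob_space M"
    and indep: "prob_space.indep_vars M (\<lambda>_. \<Theta>) X UNIV"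
    and post: "\<forall>t. distr M \<Theta> (X t) = density \<Theta> (\<lambda>\<theta>. ennreal (prior \<theta> * L \<theta> / Z))"
    and perm: "\<forall>T t \<omega>. \<sigma>s T t \<omega> permutes {..<G}"
  shows
    "(\<forall>T. even T \<longrightarrow> 0 < T \<longrightarrow> (\<forall>\<omega>\<in>space M.
        thames_sym d G B (\<lambda>\<theta>. prior \<theta> * L \<theta>) T
          (\<lambda>t. relabel d G (\<sigma>s T t \<omega>) (X t \<omega>))
        = (1 / (real T / 2)) * (\<Sum>t\<in>{T div 2 + 1..T}.
             sym_density d G B (X t \<omega>) / (prior (X t \<omega>) * L (X t \<omega>)))))
     \<and> sym_density d G B \<in> borel_measurable \<Theta>
     \<and> (\<forall>\<theta>\<in>space \<Theta>. 0 \<le> sym_density d G B \<theta>)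
     \<and> (\<integral>\<^sup>+\<theta>. ennreal (sym_density d G B \<theta>) \<partial>\<Theta>) = 1
     \<and> (\<forall>T. even T \<longrightarrow> 0 < T \<longrightarrow>
          (let est = (\<lambda>\<omega>. thames_sym d G B (\<lambda>\<theta>. prior \<theta> * L \<theta>) T
                              (\<lambda>t. relabel d G (\<sigma>s T t \<omega>) (X t \<omega>)))
           in integrable M est \<and> integrable M (\<lambda>\<omega>. (est \<omega>)\<^sup>2)
              \<and> (\<integral>\<omega>. est \<omega> \<partial>M) = 1 / Z))
     \<and> (AE \<omega> in M. (\<lambda>N. thames_sym d G B (\<lambda>\<theta>. prior \<theta> * L \<theta>) (2 * N)
                          (\<lambda>t. relabel d G (\<sigma>s (2 * N) t \<omega>) (X t \<omega>))) \<longlonglongrightarrow> 1 / Z)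
     \<and> (\<exists>s\<ge>0. weak_conv_m
          (\<lambda>N. distr M borel (\<lambda>\<omega>. sqrt (real (2 * N) / 2) *
             (thames_sym d G B (\<lambda>\<theta>. prior \<theta> * L \<theta>) (2 * N)
                (\<lambda>t. relabel d G (\<sigma>s (2 * N) t \<omega>) (X t \<omega>)) - 1 / Z)))
          (centred_normal s))"
proof -
  interpret prob_space M
    by (rule M)
  let ?pL = "\<lambda>\<theta>. prior \<theta> * L \<theta>" and ?h = "sym_density d G B"
  let ?est = "\<lambda>T \<omega>. thames_sym d G B ?pL T (\<lambda>t. relabel d G (\<sigma>s T t \<omega>) (X t \<omega>))"
  have X[measurable]: "X t \<in> measurable M \<Theta>" for t
    using indep by (simp add: indep_vars_def2)
  have inv: "?pL (relabel d G \<sigma> \<theta>) = ?pL \<theta>" if "\<sigma> permutes {..<G}" "\<theta> \<in> space \<Theta>" for \<sigma> \<theta>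
    using invariant that by blast
  have h[measurable]: "?h \<in> borel_measurable \<Theta>"
    unfolding \<Theta>_def using G B_meas by (intro borel_measurable_sym_density) (simp_all add: \<Theta>_def)
  have h_density: "(\<integral>\<^sup>+\<theta>. ennreal (?h \<theta>) \<partial>\<Theta>) = 1"
    using nn_integral_sym_density[OF G] B_meas B_pos B_fin by (simp add: \<Theta>_def)
  have identity: "?est T \<omega> = (1 / (real T / 2)) * (\<Sum>t\<in>{T div 2 + 1..T}. ?h (X t \<omega>) / ?pL (X t \<omega>))"
    if "\<omega> \<in> space M" for T \<omega>
    using inv measurable_space[OF X that] perm G by (intro thames_sym_relabelled_eq) auto
  have ratio: "?h \<theta> / ?pL \<theta> \<in> {0..1 / (measure \<Theta> B * q)}" if "\<theta> \<in> space \<Theta>" for \<theta>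
    using sym_density_div_bounded[OF inv[OF _ that]] B_q q_pos by (simp add: \<Theta>_def)
  interpret I: bounded_iid M "\<lambda>t \<omega>. ?h (X t \<omega>) / ?pL (X t \<omega>)" 0 "1 / (measure \<Theta> B * q)"
    using ratio post post_meas by (intro bounded_iid_compose[OF indep]) auto
  have mean: "I.\<mu> = 1 / Z"
    unfolding I.\<mu>_def
  proof (rule expectation_importance_ratio[OF X post[rule_format]])
    show "0 < ?pL \<theta>" if "\<theta> \<in> space \<Theta>" "?h \<theta> \<noteq> 0" for \<theta>
      using sym_density_nonzero_imp_less[OF inv[OF _ that(1)] B_q that(2)] q_pos by simp
  qed (use post_meas post_nonneg Z_pos sym_density_nonneg h_density in auto)
  have window: "?est T \<omega> = I.window_mean (T div 2) \<omega>" if "even T" "\<omega> \<in> space M" for T \<omega>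
    using identity[OF that(2), of T] that(1) by (auto simp: I.window_mean_def elim!: evenE)
  note estimator = I.window_estimator_properties[OF window, unfolded mean]
  show ?thesis
    unfolding Let_def using identity h sym_density_nonneg h_density estimator I.std_dev_nonneg by blast
qed

end
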